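(* Let $n\ge 3$ be odd. For any three distinct indices $i,j,k\in[n]$, in $R/J_n$ we have $x_{ij}\,p^+_{n,k}=x_{jk}\,p^+_{n,i}$.
   Context: Let $\mathbbm{k}$ be a field, $[n]=\{1,\dots,n\}$, $R=\mathbbm{k}[x_{ij}:1\le i\le j\le n]$ with $x_{ij}=x_{ji}$; exponent vectors in $\mathbb{N}^{\binom{n+1}{2}}$ with basis $e_{ij}=e_{ji}$. $V_n$ is the $n\times\binom{n+1}{2}$ matrix whose column indexed by $jk$ is $e_j+e_k\in\mathbb{Z}^n$; for $\mathbf b\in\mathbb{N}^n$, $V_n^{-1}[\mathbf b]=\{u\in\mathbb{N}^{\binom{n+1}{2}}:V_nu=\mathbf b\}$. $J_n$ is generated by the principal $2$-minors $x_{ii}x_{jj}-x_{ij}^2$. With $[ij|kl]:=e_{ik}+e_{jl}-e_{il}-e_{jk}$, $L'_n$ is the lattice generated by the $[ij|ij]$; two points of a fiber are equivalent if their difference lies in $L'_n$. For $n$ odd and $i\in[n]$, $p^+_{n,i}\in R/J_n$ is the sum of $x^{\mathbf a}$ over the equivalence classes $\mathbf a$ of $V_n^{-1}[(n-2,\dots,n-2)+e_i]$ modulo $L'_n$. *)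

theory Defs
  imports Main "HOL-Library.Poly_Mapping"
begin

text \<open>Variables x_ij (x_ij = x_ji) are indexed by normalized pairs (min i j, max i j).
Monomials: exponent vectors (nat \<times> nat) -0-> nat; the ring R = k[x_ij] is
((nat \<times> nat) -0-> nat) -0-> 'k.\<close>

type_synonym mono = "(nat \<times> nat, nat) poly_mapping"
type_synonym 'k spoly = "(mono, 'k) poly_mapping"

definition npair :: "nat \<Rightarrow> nat \<Rightarrow> nat \<times> nat" where
  "npair i j = (min i j, max i j)"

definition Pairs :: "nat \<Rightarrow> (nat \<times> nat) set" where
  "Pairs n = {(a, b). 1 \<le> a \<and> a \<le> b \<and> b \<le> n}"

definition xvar :: "nat \<Rightarrow> nat \<Rightarrow> 'k::comm_ring_1 spoly" where
  "xvar i j = Poly_Mapping.single (Poly_Mapping.single (npair i j) 1) 1"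

definition xmono :: "mono \<Rightarrow> 'k::comm_ring_1 spoly" where
  "xmono a = Poly_Mapping.single a 1"

definition in_J :: "nat \<Rightarrow> 'k::comm_ring_1 spoly \<Rightarrow> bool" where
  "in_J n f \<longleftrightarrow> (\<exists>q :: nat \<Rightarrow> nat \<Rightarrow> 'k spoly.
      f = (\<Sum>i\<in>{1..n}. \<Sum>j\<in>{1..n}. q i j * (xvar i i * xvar j j - xvar i j ^ 2)))"

definition eq_mod_J :: "nat \<Rightarrow> 'k::comm_ring_1 spoly \<Rightarrow> 'k spoly \<Rightarrow> bool" where
  "eq_mod_J n f g \<longleftrightarrow> in_J n (f - g)"

text \<open>Fiber V_n^{-1}[b]: exponent vectors supported on the variables with V_n u = b,
where column jk of V_n is e_j + e_k.\<close>
definition fiber :: "nat \<Rightarrow> (nat \<Rightarrow> nat) \<Rightarrow> mono set" where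
  "fiber n b = {u. Poly_Mapping.keys u \<subseteq> Pairs n \<and>
     (\<forall>l\<in>{1..n}. (\<Sum>p\<in>Pairs n. Poly_Mapping.lookup u p *
        ((if fst p = l then 1 else 0) + (if snd p = l then 1 else 0))) = b l)}"

definition bracket :: "nat \<Rightarrow> nat \<Rightarrow> (nat \<times> nat) \<Rightarrow> int" where
  "bracket i j p = (if p = npair i i then 1 else 0) + (if p = npair j j then 1 else 0)
      - (if p = npair i j then 1 else 0) - (if p = npair j i then 1 else 0)"

definition Lequiv :: "nat \<Rightarrow> mono \<Rightarrow> mono \<Rightarrow> bool" where
  "Lequiv n u v \<longleftrightarrow> (\<exists>c :: nat \<Rightarrow> nat \<Rightarrow> int. \<forall>p.
      int (Poly_Mapping.lookup u p) - int (Poly_Mapping.lookup v p) = (\<Sum>i\<in>{1..n}. \<Sum>j\<in>{1..n}. c i j * bracket i j p))"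

definition fiber_rel :: "nat \<Rightarrow> (nat \<Rightarrow> nat) \<Rightarrow> (mono \<times> mono) set" where
  "fiber_rel n b = {(u, v). u \<in> fiber n b \<and> v \<in> fiber n b \<and> Lequiv n u v}"

text \<open>p^+_{n,i}: sum of x^a over the classes a of V_n^{-1}[(n-2,..,n-2)+e_i] modulo L'_n,
one (arbitrary) representative per class.\<close>
definition p_plus :: "nat \<Rightarrow> nat \<Rightarrow> 'k::comm_ring_1 spoly" where
  "p_plus n i = (\<Sum>C\<in>fiber n (\<lambda>l. n - 2 + (if l = i then 1 else 0)) //
                      fiber_rel n (\<lambda>l. n - 2 + (if l = i then 1 else 0)).
                   xmono (SOME a. a \<in> C))"

end

theory Submission
  imports Defs
begin

text \<open>Modulo \<open>J\<^sub>n\<close> a square \<open>x\<^sub>a\<^sub>b\<^sup>2\<close> may be replaced by \<open>x\<^sub>a\<^sub>a x\<^sub>b\<^sub>b\<close>; on exponent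
  vectors this adds \<open>[ab|ab]\<close>, so it stays inside an \<open>L'\<^sub>n\<close>-class. Call an exponent vector
  reduced if its off-diagonal entries are at most \<open>1\<close>. Every class of a fiber contains exactly
  one reduced vector (off-diagonal entries are fixed mod 2 by \<open>L'\<^sub>n\<close>, and then the diagonal
  ones by the vertex degrees), hence \<open>p\<^sup>+\<^sub>n\<^sub>,\<^sub>i\<close> is congruent to the sum of the reduced monomials
  of its fiber. Multiplying by \<open>x\<^sub>a\<^sub>b\<close> and reducing is a bijection from the reduced vectors
  of degree \<open>c - e\<^sub>a - e\<^sub>b\<close> onto those of degree \<open>c\<close> whenever \<open>c\<^sub>a = c\<^sub>b = n - 1\<close>: a reduced
  vector of degree \<open>c\<close> without \<open>x\<^sub>a\<^sub>b\<close> has at most \<open>n - 2\<close> off-diagonal variables at \<open>a\<close>,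
  so it contains \<open>x\<^sub>a\<^sub>a\<close>, and likewise \<open>x\<^sub>b\<^sub>b\<close>. With \<open>c = (n - 2, \<dots>, n - 2) + e\<^sub>i + e\<^sub>j + e\<^sub>k\<close>
  both \<open>x\<^sub>i\<^sub>j p\<^sup>+\<^sub>n\<^sub>,\<^sub>k\<close> and \<open>x\<^sub>j\<^sub>k p\<^sup>+\<^sub>n\<^sub>,\<^sub>i\<close> are therefore congruent to the sum of the reduced
  monomials of degree \<open>c\<close>.\<close>

alias lookup = Poly_Mapping.lookup
alias keys = Poly_Mapping.keys
alias single = Poly_Mapping.single

lemma lookup_single_if: "lookup (single k v) q = (if k = q then v else 0)"
  by (simp add: lookup_single when_def)

lemma xmono_add: "xmono (a + b) = (xmono a * xmono b :: 'k::comm_ring_1 spoly)"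
  unfolding xmono_def by (simp add: mult_single)

lemma xvar_power: "xvar i j ^ m = (xmono (single (npair i j) m) :: 'k::comm_ring_1 spoly)"
proof (induction m)
  case 0
  then show ?case by (simp add: xmono_def one_poly_mapping.abs_eq)
next
  case (Suc m)
  then show ?case by (simp add: xvar_def xmono_def mult_single flip: single_add)
qed

lemma xvar_eq_xmono: "xvar i j = (xmono (single (npair i j) 1) :: 'k::comm_ring_1 spoly)"
  using xvar_power[of i j 1] by simp

section \<open>The ideal \<open>J\<^sub>n\<close>\<close>

lemma sum_sum_delta:
  assumes "finite A" "finite B" "a \<in> A" "b \<in> B"
  shows "(\<Sum>i\<in>A. \<Sum>j\<in>B. (if i = a \<and> j = b then x else 0) * F i j) = (x * F a b :: 'a::comm_semiring_1)"
proof -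
  have "(\<Sum>i\<in>A. \<Sum>j\<in>B. (if i = a \<and> j = b then x else 0) * F i j)
      = (\<Sum>i\<in>A. if i = a then (\<Sum>j\<in>B. if j = b then x * F i j else 0) else 0)"
    by (auto intro!: sum.cong)
  then show ?thesis using assms by simp
qed

definition minor :: "nat \<Rightarrow> nat \<Rightarrow> 'k::comm_ring_1 spoly" where
  "minor i j = xvar i i * xvar j j - xvar i j ^ 2"

lemma in_J_iff: "in_J n f \<longleftrightarrow> (\<exists>q. f = (\<Sum>i\<in>{1..n}. \<Sum>j\<in>{1..n}. q i j * minor i j))"
  by (simp add: in_J_def minor_def)

lemma in_J_zero: "in_J n 0"
  unfolding in_J_iff by (rule exI[of _ "\<lambda>i j. 0"]) simp

lemma in_J_add:
  assumes "in_J n f" "in_J n g" shows "in_J n (f + g)"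
proof -
  obtain q r where "f = (\<Sum>i\<in>{1..n}. \<Sum>j\<in>{1..n}. q i j * minor i j)"
    and "g = (\<Sum>i\<in>{1..n}. \<Sum>j\<in>{1..n}. r i j * minor i j)"
    using assms unfolding in_J_iff by blast
  then show ?thesis unfolding in_J_iff
    by (intro exI[of _ "\<lambda>i j. q i j + r i j"]) (simp add: distrib_right sum.distrib)
qed

lemma in_J_mult_left:
  assumes "in_J n f" shows "in_J n (h * f)"
proof -
  obtain q where "f = (\<Sum>i\<in>{1..n}. \<Sum>j\<in>{1..n}. q i j * minor i j)"
    using assms unfolding in_J_iff by blast
  then show ?thesis unfolding in_J_iff
    by (intro exI[of _ "\<lambda>i j. h * q i j"]) (simp add: sum_distrib_left mult.assoc)
qed

lemma in_J_sum: "(\<And>x. x \<in> A \<Longrightarrow> in_J n (f x)) \<Longrightarrow> in_J n (sum f A)"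
  by (induction A rule: infinite_finite_induct) (auto intro: in_J_zero in_J_add)

lemma in_J_minor: "a \<in> {1..n} \<Longrightarrow> b \<in> {1..n} \<Longrightarrow> in_J n (minor a b)"
  unfolding in_J_iff
  by (rule exI[of _ "\<lambda>i j. if i = a \<and> j = b then 1 else 0"]) (simp add: sum_sum_delta)

lemma eq_mod_J_refl: "eq_mod_J n f f"
  by (simp add: eq_mod_J_def in_J_zero)

lemma eq_mod_J_sym: "eq_mod_J n f g \<Longrightarrow> eq_mod_J n g f"
  unfolding eq_mod_J_def using in_J_mult_left[of n "f - g" "-1"] by simp

lemma eq_mod_J_trans [trans]: "eq_mod_J n f g \<Longrightarrow> eq_mod_J n g h \<Longrightarrow> eq_mod_J n f h"
  unfolding eq_mod_J_def using in_J_add by fastforce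

lemma eq_mod_J_mult_left: "eq_mod_J n f g \<Longrightarrow> eq_mod_J n (h * f) (h * g)"
  unfolding eq_mod_J_def using in_J_mult_left by (fastforce simp: right_diff_distrib)

lemma eq_mod_J_sum:
  "(\<And>x. x \<in> A \<Longrightarrow> eq_mod_J n (f x) (g x)) \<Longrightarrow> eq_mod_J n (sum f A) (sum g A)"
  unfolding eq_mod_J_def using in_J_sum[of A n "\<lambda>x. f x - g x"] by (simp add: sum_subtractf)

lemma eq_mod_J_square_xvar:
  assumes "a \<in> {1..n}" "b \<in> {1..n}"
  shows "eq_mod_J n (xvar a b ^ 2) (xvar a a * xvar b b)"
  using eq_mod_J_sym[of n "xvar a a * xvar b b" "xvar a b ^ 2"] in_J_minor[OF assms]
  by (simp add: eq_mod_J_def minor_def)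

section \<open>Fibers, vertex degrees and the lattice \<open>L'\<^sub>n\<close>\<close>

lemma finite_Pairs: "finite (Pairs n)"
  by (rule finite_subset[of _ "{1..n} \<times> {1..n}"]) (auto simp: Pairs_def)

lemma npair_in_Pairs: "a \<in> {1..n} \<Longrightarrow> b \<in> {1..n} \<Longrightarrow> npair a b \<in> Pairs n"
  unfolding npair_def Pairs_def by auto

lemma npair_commute: "npair a b = npair b a"
  unfolding npair_def by (simp add: min.commute max.commute)

lemma npair_self: "npair a a = (a, a)"
  by (simp add: npair_def)

lemma keys_subset_Pairs_iff: "keys u \<subseteq> Pairs n \<longleftrightarrow> (\<forall>q. q \<notin> Pairs n \<longrightarrow> lookup u q = 0)"
  by (auto simp: in_keys_iff)

definition weight :: "nat \<Rightarrow> (nat \<times> nat \<Rightarrow> nat) \<Rightarrow> mono \<Rightarrow> nat" where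
  "weight n f u = (\<Sum>p\<in>Pairs n. lookup u p * f p)"

definition incidence :: "nat \<Rightarrow> nat \<times> nat \<Rightarrow> nat" where
  "incidence l p = (if fst p = l then 1 else 0) + (if snd p = l then 1 else 0)"

lemma fiber_iff:
  "u \<in> fiber n b \<longleftrightarrow> keys u \<subseteq> Pairs n \<and> (\<forall>l\<in>{1..n}. weight n (incidence l) u = b l)"
  unfolding fiber_def weight_def incidence_def by simp

lemma fiber_lookup_outside_Pairs: "u \<in> fiber n b \<Longrightarrow> q \<notin> Pairs n \<Longrightarrow> lookup u q = 0"
  unfolding fiber_iff by (meson in_keys_iff subsetD)

lemma weight_add: "weight n f (u + v) = weight n f u + weight n f v"
  unfolding weight_def by (simp add: lookup_add distrib_right sum.distrib)

lemma weight_single: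
  assumes "q \<in> Pairs n" shows "weight n f (single q m) = m * f q"
proof -
  have "weight n f (single q m) = (\<Sum>p\<in>Pairs n. if p = q then m * f q else 0)"
    unfolding weight_def by (rule sum.cong) (auto simp: lookup_single_if)
  then show ?thesis using assms finite_Pairs by simp
qed

lemma incidence_npair: "incidence l (npair a b) = (if a = l then 1 else 0) + (if b = l then 1 else 0)"
  unfolding incidence_def npair_def by (auto simp: min_def max_def)

lemma incidence_neq_0_imp_npair:
  assumes "p \<in> Pairs n" "incidence a p \<noteq> 0"
  shows "p \<in> insert (a, a) (npair a ` ({1..n} - {a}))"
proof -
  obtain x y where p: "p = (x, y)" "x \<in> {1..n}" "y \<in> {1..n}" "x \<le> y"
    using assms(1) by (cases p) (auto simp: Pairs_def)
  have "x = a \<or> y = a"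
    using assms(2) p(1) by (auto simp: incidence_def split: if_splits)
  then have "p = npair a y \<and> y \<in> {1..n} \<or> p = npair a x \<and> x \<in> {1..n}"
    using p by (auto simp: npair_def)
  then show ?thesis
    by (auto simp: npair_self)
qed

lemma vertex_degree:
  assumes "a \<in> {1..n}"
  shows "weight n (incidence a) u = 2 * lookup u (a, a) + (\<Sum>l\<in>{1..n} - {a}. lookup u (npair a l))"
proof -
  let ?N = "npair a ` ({1..n} - {a})"
  have N: "insert (a, a) ?N \<subseteq> Pairs n" "(a, a) \<notin> ?N"
    using assms by (auto simp: npair_in_Pairs Pairs_def) (auto simp: npair_def)
  have inj: "inj_on (npair a) ({1..n} - {a})"
    by (rule inj_onI) (auto simp: npair_def min_def max_def split: if_splits)
  have "weight n (incidence a) u = (\<Sum>p\<in>insert (a, a) ?N. lookup u p * incidence a p)"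
    unfolding weight_def using N(1) incidence_neq_0_imp_npair
    by (intro sum.mono_neutral_right[OF finite_Pairs]) auto
  also have "\<dots> = lookup u (a, a) * incidence a (a, a) + (\<Sum>p\<in>?N. lookup u p * incidence a p)"
    using N(2) by (intro sum.insert) auto
  also have "(\<Sum>p\<in>?N. lookup u p * incidence a p) = (\<Sum>l\<in>{1..n} - {a}. lookup u (npair a l))"
    using inj by (auto simp: sum.reindex incidence_npair intro!: sum.cong)
  also have "lookup u (a, a) * incidence a (a, a) = 2 * lookup u (a, a)"
    by (simp add: incidence_def)
  finally show ?thesis .
qed

lemma Lequiv_refl: "Lequiv n u u"
  unfolding Lequiv_def by (rule exI[of _ "\<lambda>i j. 0"]) simp

lemma Lequiv_sym:
  assumes "Lequiv n u v" shows "Lequiv n v u"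
proof -
  obtain c where c: "\<And>p. int (lookup u p) - int (lookup v p)
      = (\<Sum>i\<in>{1..n}. \<Sum>j\<in>{1..n}. c i j * bracket i j p)"
    using assms unfolding Lequiv_def by blast
  have "int (lookup v p) - int (lookup u p)
      = (\<Sum>i\<in>{1..n}. \<Sum>j\<in>{1..n}. - c i j * bracket i j p)" for p
    using c[of p] by (simp add: sum_negf)
  then show ?thesis unfolding Lequiv_def by (intro exI[of _ "\<lambda>i j. - c i j"]) blast
qed

lemma Lequiv_trans:
  assumes "Lequiv n u v" "Lequiv n v w" shows "Lequiv n u w"
proof -
  obtain c d where c:
    "\<And>p. int (lookup u p) - int (lookup v p) = (\<Sum>i\<in>{1..n}. \<Sum>j\<in>{1..n}. c i j * bracket i j p)"
    and d: "\<And>p. int (lookup v p) - int (lookup w p) = (\<Sum>i\<in>{1..n}. \<Sum>j\<in>{1..n}. d i j * bracket i j p)"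
    using assms unfolding Lequiv_def by blast
  have "int (lookup u p) - int (lookup w p)
      = (\<Sum>i\<in>{1..n}. \<Sum>j\<in>{1..n}. (c i j + d i j) * bracket i j p)" for p
    unfolding distrib_right sum.distrib using c[of p] d[of p] by linarith
  then show ?thesis unfolding Lequiv_def by (intro exI[of _ "\<lambda>i j. c i j + d i j"]) blast
qed

lemma equiv_fiber_rel: "equiv (fiber n d) (fiber_rel n d)"
  by (rule equivI) (auto simp: refl_on_def sym_def trans_def fiber_rel_def
      intro: Lequiv_refl Lequiv_sym Lequiv_trans)

lemma bracket_even_off_diagonal: "fst q \<noteq> snd q \<Longrightarrow> even (bracket i j q)"
  unfolding bracket_def npair_def by (auto simp: min_def max_def)

section \<open>Reduced exponent vectors\<close>

definition reduced :: "mono \<Rightarrow> bool" where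
  "reduced u \<longleftrightarrow> (\<forall>p. fst p \<noteq> snd p \<longrightarrow> lookup u p \<le> 1)"

definition reduced_fiber :: "nat \<Rightarrow> (nat \<Rightarrow> nat) \<Rightarrow> mono set" where
  "reduced_fiber n d = {r \<in> fiber n d. reduced r}"

lemma reduced_lookup_le: "reduced u \<Longrightarrow> fst p \<noteq> snd p \<Longrightarrow> lookup u p \<le> 1"
  unfolding reduced_def by blast

lemma npair_off_diagonal: "a \<noteq> b \<Longrightarrow> fst (npair a b) \<noteq> snd (npair a b)"
  by (simp add: npair_def min_def max_def)

lemma npair_neq_diagonal: "a \<noteq> b \<Longrightarrow> npair a b \<noteq> (a, a) \<and> npair a b \<noteq> (b, b)"
  by (simp add: npair_def min_def max_def)

text \<open>Off the diagonal \<open>L'\<^sub>n\<close> only changes exponents by even amounts, and on the diagonal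
  the exponents are then determined by the vertex degrees.\<close>
lemma reduced_fiber_Lequiv_imp_eq:
  assumes r: "r \<in> reduced_fiber n d" and s: "s \<in> reduced_fiber n d" and "Lequiv n r s"
  shows "r = s"
proof (rule poly_mapping_eqI)
  obtain c where c: "\<And>p. int (lookup r p) - int (lookup s p)
      = (\<Sum>i\<in>{1..n}. \<Sum>j\<in>{1..n}. c i j * bracket i j p)"
    using \<open>Lequiv n r s\<close> unfolding Lequiv_def by blast
  have off: "lookup r q = lookup s q" if "fst q \<noteq> snd q" for q
  proof -
    have "even (int (lookup r q) - int (lookup s q))"
      unfolding c by (intro dvd_sum dvd_mult bracket_even_off_diagonal that)
    moreover have "lookup r q \<le> 1" "lookup s q \<le> 1"
      using r s reduced_lookup_le[OF _ that] by (auto simp: reduced_fiber_def)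
    ultimately show ?thesis by presburger
  qed
  have diag: "lookup r (l, l) = lookup s (l, l)" if l: "l \<in> {1..n}" for l
  proof -
    have "weight n (incidence l) r = weight n (incidence l) s"
      using r s l by (simp add: reduced_fiber_def fiber_iff)
    moreover have "lookup r (npair l m) = lookup s (npair l m)" if "m \<in> {1..n} - {l}" for m
      using that by (intro off npair_off_diagonal) auto
    ultimately show ?thesis by (simp add: vertex_degree[OF l])
  qed
  fix q
  show "lookup r q = lookup s q"
  proof (cases "q \<in> Pairs n")
    case True
    show ?thesis
    proof (cases "fst q = snd q")
      case True
      with \<open>q \<in> Pairs n\<close> obtain l where "q = (l, l)" "l \<in> {1..n}"
        by (cases q) (auto simp: Pairs_def)
      with diag show ?thesis by simp
    qed (rule off)
  next
    case False
    with r s show ?thesis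
      using fiber_lookup_outside_Pairs[of _ n d q] by (simp add: reduced_fiber_def)
  qed
qed

abbreviation off_diagonal_degree :: "nat \<Rightarrow> mono \<Rightarrow> nat" where
  "off_diagonal_degree n u \<equiv> weight n (\<lambda>p. if fst p = snd p then 0 else 1) u"

lemma reduction_step:
  fixes u :: mono
  assumes u: "u \<in> fiber n d" and ab: "a \<in> {1..n}" "b \<in> {1..n}" "a \<noteq> b"
    and two: "lookup u (npair a b) \<ge> 2"
  defines "u' \<equiv> u - single (npair a b) 2 + single (a, a) 1 + single (b, b) 1"
  shows "u' \<in> fiber n d" and "Lequiv n u u'"
    and "eq_mod_J n (xmono u :: 'k::comm_ring_1 spoly) (xmono u')"
    and "off_diagonal_degree n u' < off_diagonal_degree n u"
proof -
  let ?p = "npair a b"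
  define t where "t = u - single ?p 2"
  have lookup_t: "lookup t q = lookup u q - (if q = ?p then 2 else 0)" for q
    unfolding t_def by (auto simp: lookup_minus lookup_single_if)
  have u_eq: "u = t + single ?p 2"
    by (rule poly_mapping_eqI) (use two in \<open>auto simp: lookup_add lookup_t lookup_single_if\<close>)
  have u'_eq: "u' = t + single (a, a) 1 + single (b, b) 1"
    by (simp add: u'_def t_def)
  have P: "?p \<in> Pairs n" "(a, a) \<in> Pairs n" "(b, b) \<in> Pairs n"
    using ab npair_in_Pairs[OF ab(1,2)] by (auto simp: Pairs_def)
  have weights: "weight n f u = weight n f t + 2 * f ?p"
      "weight n f u' = weight n f t + f (a, a) + f (b, b)" for f
    using P by (simp_all add: u_eq u'_eq weight_add weight_single)
  have "keys t \<subseteq> Pairs n"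
    using u by (auto simp: fiber_iff keys_subset_Pairs_iff lookup_t)
  then have "keys u' \<subseteq> Pairs n"
    using P by (auto simp: u'_eq keys_subset_Pairs_iff lookup_add lookup_single_if)
  moreover have "weight n (incidence l) u' = weight n (incidence l) u" for l
    using ab by (simp add: weights incidence_npair) (simp add: incidence_def)
  ultimately show "u' \<in> fiber n d"
    using u by (simp add: fiber_iff)
  show "Lequiv n u u'"
    unfolding Lequiv_def
  proof (intro exI[of _ "\<lambda>i j. if i = a \<and> j = b then -1 else 0"] allI)
    fix q
    have "int (lookup u q) - int (lookup u' q) = - bracket a b q"
      using ab two by (auto simp: u_eq u'_eq bracket_def npair_commute[of b a] lookup_add
          lookup_single_if npair_self)
    then show "int (lookup u q) - int (lookup u' q)
        = (\<Sum>i\<in>{1..n}. \<Sum>j\<in>{1..n}. (if i = a \<and> j = b then -1 else 0) * bracket i j q)"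
      using ab by (simp add: sum_sum_delta)
  qed
  have "xmono u = (xmono t * xvar a b ^ 2 :: 'k spoly)"
    by (simp add: u_eq xmono_add xvar_power)
  moreover have "xmono u' = (xmono t * (xvar a a * xvar b b) :: 'k spoly)"
    by (simp add: u'_eq xmono_add xvar_eq_xmono npair_self mult.assoc)
  ultimately show "eq_mod_J n (xmono u :: 'k spoly) (xmono u')"
    using eq_mod_J_mult_left[OF eq_mod_J_square_xvar[OF ab(1,2)]] by simp
  show "off_diagonal_degree n u' < off_diagonal_degree n u"
    using ab by (simp add: weights npair_def)
qed

lemma exists_reduced_fiber_representative:
  assumes "u \<in> fiber n d"
  shows "\<exists>r\<in>reduced_fiber n d. Lequiv n u r \<and> eq_mod_J n (xmono u :: 'k::comm_ring_1 spoly) (xmono r)"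
  using assms
proof (induction "off_diagonal_degree n u" arbitrary: u rule: less_induct)
  case less
  show ?case
  proof (cases "reduced u")
    case True
    then show ?thesis
      using less.prems by (auto simp: reduced_fiber_def Lequiv_refl eq_mod_J_refl)
  next
    case False
    then obtain p where "fst p \<noteq> snd p" "lookup u p \<ge> 2"
      unfolding reduced_def by force
    moreover from \<open>lookup u p \<ge> 2\<close> have "p \<in> keys u"
      by (simp add: in_keys_iff)
    then have "p \<in> Pairs n"
      using less.prems by (auto simp: fiber_iff)
    moreover obtain a b where "p = (a, b)"
      by (cases p)
    ultimately have ab: "a \<in> {1..n}" "b \<in> {1..n}" "a \<noteq> b" "lookup u (npair a b) \<ge> 2"
      by (auto simp: Pairs_def npair_def)
    let ?u' = "u - single (npair a b) 2 + single (a, a) 1 + single (b, b) 1"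
    note step = reduction_step[OF less.prems ab]
    from less.hyps[OF step(4,1)] obtain r where "r \<in> reduced_fiber n d"
      and "Lequiv n ?u' r" and "eq_mod_J n (xmono ?u' :: 'k spoly) (xmono r)"
      by blast
    with step(2,3) show ?thesis
      by (blast intro: Lequiv_trans eq_mod_J_trans)
  qed
qed

lemma eq_mod_J_xmono_reduced_fiber:
  assumes r: "r \<in> reduced_fiber n d" and "(r, u) \<in> fiber_rel n d"
  shows "eq_mod_J n (xmono u :: 'k::comm_ring_1 spoly) (xmono r)"
proof -
  have u: "u \<in> fiber n d" "Lequiv n r u"
    using assms(2) by (simp_all add: fiber_rel_def)
  then obtain r' where r': "r' \<in> reduced_fiber n d" "Lequiv n u r'"
    and eq: "eq_mod_J n (xmono u :: 'k spoly) (xmono r')"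
    using exists_reduced_fiber_representative by blast
  have "r = r'"
    using reduced_fiber_Lequiv_imp_eq[OF r r'(1) Lequiv_trans[OF u(2) r'(2)]] .
  with eq show ?thesis by simp
qed

lemma bij_betw_reduced_fiber_quotient:
  "bij_betw (\<lambda>r. fiber_rel n d `` {r}) (reduced_fiber n d) (fiber n d // fiber_rel n d)"
proof (rule bij_betw_imageI)
  have eqv: "equiv (fiber n d) (fiber_rel n d)"
    by (rule equiv_fiber_rel)
  show "inj_on (\<lambda>r. fiber_rel n d `` {r}) (reduced_fiber n d)"
  proof (rule inj_onI)
    fix r s assume r: "r \<in> reduced_fiber n d" and s: "s \<in> reduced_fiber n d"
      and "fiber_rel n d `` {r} = fiber_rel n d `` {s}"
    then have "(r, s) \<in> fiber_rel n d"
      using eqv by (simp add: reduced_fiber_def eq_equiv_class_iff)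
    with r s show "r = s"
      by (simp add: fiber_rel_def reduced_fiber_Lequiv_imp_eq)
  qed
  show "(\<lambda>r. fiber_rel n d `` {r}) ` reduced_fiber n d = fiber n d // fiber_rel n d"
  proof
    show "(\<lambda>r. fiber_rel n d `` {r}) ` reduced_fiber n d \<subseteq> fiber n d // fiber_rel n d"
      by (auto simp: reduced_fiber_def intro: quotientI)
    show "fiber n d // fiber_rel n d \<subseteq> (\<lambda>r. fiber_rel n d `` {r}) ` reduced_fiber n d"
    proof
      fix C assume "C \<in> fiber n d // fiber_rel n d"
      then obtain u where u: "u \<in> fiber n d" and C: "C = fiber_rel n d `` {u}"
        by (rule quotientE)
      then obtain r where r: "r \<in> reduced_fiber n d" "Lequiv n u r"
        using exists_reduced_fiber_representative[where 'k = int] by blast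
      then have "(u, r) \<in> fiber_rel n d"
        using u by (simp add: fiber_rel_def reduced_fiber_def)
      then have "C = fiber_rel n d `` {r}"
        using eqv C by (simp add: equiv_class_eq_iff)
      with r show "C \<in> (\<lambda>r. fiber_rel n d `` {r}) ` reduced_fiber n d"
        by blast
    qed
  qed
qed

text \<open>The representatives picked by \<open>SOME\<close> do not matter: each is congruent modulo \<open>J\<^sub>n\<close>
  to the unique reduced exponent vector of its class.\<close>
lemma sum_quotient_eq_mod_J_sum_reduced_fiber:
  "eq_mod_J n (\<Sum>C\<in>fiber n d // fiber_rel n d. xmono (SOME a. a \<in> C) :: 'k::comm_ring_1 spoly)
      (\<Sum>r\<in>reduced_fiber n d. xmono r)"
proof -
  have "(\<Sum>C\<in>fiber n d // fiber_rel n d. xmono (SOME a. a \<in> C) :: 'k spoly)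
      = (\<Sum>r\<in>reduced_fiber n d. xmono (SOME a. a \<in> fiber_rel n d `` {r}))"
    by (rule sum.reindex_bij_betw[OF bij_betw_reduced_fiber_quotient, symmetric])
  also have "eq_mod_J n \<dots> (\<Sum>r\<in>reduced_fiber n d. xmono r)"
  proof (rule eq_mod_J_sum)
    fix r assume r: "r \<in> reduced_fiber n d"
    then have "r \<in> fiber_rel n d `` {r}"
      using equiv_class_self[OF equiv_fiber_rel] by (simp add: reduced_fiber_def)
    then have "(r, SOME a. a \<in> fiber_rel n d `` {r}) \<in> fiber_rel n d"
      by (metis Image_singleton_iff someI)
    with r show "eq_mod_J n (xmono (SOME a. a \<in> fiber_rel n d `` {r}) :: 'k spoly) (xmono r)"
      by (rule eq_mod_J_xmono_reduced_fiber)
  qed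
  finally show ?thesis .
qed

lemma p_plus_eq_mod_J:
  "eq_mod_J n (p_plus n i :: 'k::comm_ring_1 spoly)
     (\<Sum>r\<in>reduced_fiber n (\<lambda>l. n - 2 + (if l = i then 1 else 0)). xmono r)"
  unfolding p_plus_def by (rule sum_quotient_eq_mod_J_sum_reduced_fiber)

section \<open>Multiplication by a variable\<close>

lemma diff_single_add_cancel:
  fixes u :: mono shows "m \<le> lookup u q \<Longrightarrow> u - single q m + single q m = u"
  by (rule poly_mapping_eqI) (auto simp: lookup_add lookup_minus lookup_single_if)

lemma weight_diff_single:
  fixes u :: mono
  shows "m \<le> lookup u q \<Longrightarrow> q \<in> Pairs n \<Longrightarrow> weight n f (u - single q m) + m * f q = weight n f u"
  by (metis diff_single_add_cancel weight_add weight_single)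

lemma incidence_diag_pair:
  "a \<noteq> b \<Longrightarrow> incidence l (a, a) + incidence l (b, b) = 2 * incidence l (npair a b)"
  unfolding incidence_npair by (simp add: incidence_def)

text \<open>The reduced form of \<open>x\<^sub>a\<^sub>b x\<^sup>r\<close> for reduced \<open>r\<close>, and its inverse.\<close>
definition mult_reduce :: "nat \<Rightarrow> nat \<Rightarrow> mono \<Rightarrow> mono" where
  "mult_reduce a b r = (if lookup r (npair a b) = 0 then r + single (npair a b) 1
     else r - single (npair a b) 1 + single (a, a) 1 + single (b, b) 1)"

definition div_reduce :: "nat \<Rightarrow> nat \<Rightarrow> mono \<Rightarrow> mono" where
  "div_reduce a b s = (if lookup s (npair a b) = 1 then s - single (npair a b) 1
     else s + single (npair a b) 1 - single (a, a) 1 - single (b, b) 1)"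

lemma xvar_mult_xmono_eq_mod_J_mult_reduce:
  assumes "a \<in> {1..n}" "b \<in> {1..n}"
  shows "eq_mod_J n (xvar a b * xmono r :: 'k::comm_ring_1 spoly) (xmono (mult_reduce a b r))"
proof (cases "lookup r (npair a b) = 0")
  case True
  then show ?thesis
    by (simp add: mult_reduce_def xvar_eq_xmono xmono_add mult.commute eq_mod_J_refl)
next
  case False
  let ?t = "r - single (npair a b) 1"
  have "xvar a b * xmono r = (xmono ?t * xvar a b ^ 2 :: 'k spoly)"
    using False diff_single_add_cancel[of 1 r "npair a b"]
    by (simp add: xvar_eq_xmono power2_eq_square flip: xmono_add) (simp add: algebra_simps)
  moreover have "xmono (mult_reduce a b r) = (xmono ?t * (xvar a a * xvar b b) :: 'k spoly)"
    using False by (simp add: mult_reduce_def xmono_add xvar_eq_xmono npair_self mult.assoc)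
  ultimately show ?thesis
    using eq_mod_J_mult_left[OF eq_mod_J_square_xvar[OF assms]] by simp
qed

lemma mult_reduce_in_reduced_fiber:
  assumes ab: "a \<in> {1..n}" "b \<in> {1..n}" "a \<noteq> b" and r: "r \<in> reduced_fiber n d"
    and c: "\<forall>l\<in>{1..n}. c l = d l + incidence l (npair a b)"
  shows "mult_reduce a b r \<in> reduced_fiber n c"
proof -
  let ?p = "npair a b"
  have P: "?p \<in> Pairs n" "(a, a) \<in> Pairs n" "(b, b) \<in> Pairs n"
    using ab npair_in_Pairs[OF ab(1,2)] by (auto simp: Pairs_def)
  have off: "fst ?p \<noteq> snd ?p"
    using npair_off_diagonal[OF ab(3)] .
  have outside: "lookup r q = 0" if "q \<notin> Pairs n" for q
    using r that fiber_lookup_outside_Pairs[of r n d q] by (simp add: reduced_fiber_def)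
  have red: "reduced r" and deg: "\<forall>l\<in>{1..n}. weight n (incidence l) r = d l"
    using r by (simp_all add: reduced_fiber_def fiber_iff)
  show ?thesis
  proof (cases "lookup r ?p = 0")
    case True
    have "mult_reduce a b r = r + single ?p 1"
      using True by (simp add: mult_reduce_def)
    moreover have "keys (r + single ?p 1) \<subseteq> Pairs n"
      using P outside by (auto simp: keys_subset_Pairs_iff lookup_add lookup_single_if)
    moreover have "reduced (r + single ?p 1)"
      using red True by (auto simp: reduced_def lookup_add lookup_single_if)
    ultimately show ?thesis
      using deg c P by (simp add: reduced_fiber_def fiber_iff weight_add weight_single)
  next
    case False
    with red off have one: "lookup r ?p = 1"
      using reduced_lookup_le[of r ?p] by simp
    let ?t = "r - single ?p 1"
    have "mult_reduce a b r = ?t + single (a, a) 1 + single (b, b) 1"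
      using False by (simp add: mult_reduce_def)
    moreover have "keys (?t + single (a, a) 1 + single (b, b) 1) \<subseteq> Pairs n"
      using P outside by (auto simp: keys_subset_Pairs_iff lookup_add lookup_minus lookup_single_if)
    moreover have "reduced (?t + single (a, a) 1 + single (b, b) 1)"
      using red one by (auto simp: reduced_def lookup_add lookup_minus lookup_single_if)
    moreover have "weight n (incidence l) (?t + single (a, a) 1 + single (b, b) 1)
        = weight n (incidence l) r + incidence l ?p" for l
      unfolding weight_add weight_single[OF P(2)] weight_single[OF P(3)]
      using weight_diff_single[of 1 r ?p n "incidence l"] one P(1) incidence_diag_pair[OF ab(3), of l]
      by linarith
    ultimately show ?thesis
      using deg c by (simp add: reduced_fiber_def fiber_iff)
  qed
qed

lemma reduced_fiber_diagonal_pos: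
  assumes s: "s \<in> reduced_fiber n c" and ab: "a \<in> {1..n}" "b \<in> {1..n}" "a \<noteq> b"
    and s_ab: "lookup s (npair a b) = 0" and c_a: "c a = n - 1"
  shows "lookup s (a, a) \<ge> 1"
proof -
  have "lookup s (npair a l) \<le> 1" if "l \<noteq> a" for l
    using s reduced_lookup_le[OF _ npair_off_diagonal[OF that[symmetric]]]
    by (simp add: reduced_fiber_def)
  then have "(\<Sum>l\<in>{1..n} - {a, b}. lookup s (npair a l)) \<le> (\<Sum>l\<in>{1..n} - {a, b}. 1)"
    by (intro sum_mono) auto
  also have "\<dots> = n - 2"
    using ab by (simp add: card_Diff_subset)
  also have "(\<Sum>l\<in>{1..n} - {a, b}. lookup s (npair a l)) = (\<Sum>l\<in>{1..n} - {a}. lookup s (npair a l))"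
  proof -
    have "{1..n} - {a, b} = {1..n} - {a} - {b}"
      by auto
    then show ?thesis
      using ab s_ab sum.remove[of "{1..n} - {a}" b "\<lambda>l. lookup s (npair a l)"] by simp
  qed
  finally have "(\<Sum>l\<in>{1..n} - {a}. lookup s (npair a l)) \<le> n - 2"
    by simp
  moreover have "weight n (incidence a) s = n - 1"
    using s ab c_a by (simp add: reduced_fiber_def fiber_iff)
  moreover have "n \<ge> 2"
    using ab by auto
  ultimately show ?thesis
    using vertex_degree[OF ab(1), of s] by linarith
qed

lemma reduced_fiber_pair_or_diagonals:
  assumes s: "s \<in> reduced_fiber n c" and ab: "a \<in> {1..n}" "b \<in> {1..n}" "a \<noteq> b"
    and c_a: "c a = n - 1" and c_b: "c b = n - 1"
  shows "lookup s (npair a b) = 1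
    \<or> lookup s (npair a b) = 0 \<and> lookup s (a, a) \<ge> 1 \<and> lookup s (b, b) \<ge> 1"
proof -
  have "lookup s (npair a b) \<le> 1"
    using s reduced_lookup_le npair_off_diagonal[OF ab(3)] by (simp add: reduced_fiber_def)
  then show ?thesis
    using reduced_fiber_diagonal_pos[OF s ab _ c_a]
      reduced_fiber_diagonal_pos[OF s ab(2,1) ab(3)[symmetric] _ c_b]
    by (auto simp: npair_commute[of b a])
qed

lemma div_reduce_in_reduced_fiber:
  assumes ab: "a \<in> {1..n}" "b \<in> {1..n}" "a \<noteq> b" and s: "s \<in> reduced_fiber n c"
    and c: "\<forall>l\<in>{1..n}. c l = d l + incidence l (npair a b)"
    and c_a: "c a = n - 1" and c_b: "c b = n - 1"
  shows "div_reduce a b s \<in> reduced_fiber n d"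
proof -
  let ?p = "npair a b"
  have P: "?p \<in> Pairs n" "(a, a) \<in> Pairs n" "(b, b) \<in> Pairs n"
    using ab npair_in_Pairs[OF ab(1,2)] by (auto simp: Pairs_def)
  have distinct: "?p \<noteq> (a, a)" "?p \<noteq> (b, b)" "(a, a) \<noteq> (b, b)"
    using ab(3) npair_neq_diagonal by auto
  have outside: "lookup s q = 0" if "q \<notin> Pairs n" for q
    using s that fiber_lookup_outside_Pairs[of s n c q] by (simp add: reduced_fiber_def)
  have red: "reduced s" and deg: "\<forall>l\<in>{1..n}. weight n (incidence l) s = c l"
    using s by (simp_all add: reduced_fiber_def fiber_iff)
  show ?thesis
  proof (cases "lookup s ?p = 1")
    case True
    have "div_reduce a b s = s - single ?p 1"
      using True by (simp add: div_reduce_def)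
    moreover have "keys (s - single ?p 1) \<subseteq> Pairs n"
      using outside by (auto simp: keys_subset_Pairs_iff lookup_minus lookup_single_if)
    moreover have "reduced (s - single ?p 1)"
      using red by (auto simp: reduced_def lookup_minus lookup_single_if)
    moreover have "weight n (incidence l) (s - single ?p 1) = d l" if "l \<in> {1..n}" for l
      using weight_diff_single[of 1 s ?p n "incidence l"] True P(1) deg c that by simp
    ultimately show ?thesis
      by (simp add: reduced_fiber_def fiber_iff)
  next
    case False
    then have zero: "lookup s ?p = 0" and diag: "lookup s (a, a) \<ge> 1" "lookup s (b, b) \<ge> 1"
      using reduced_fiber_pair_or_diagonals[OF s ab c_a c_b] by auto
    let ?u = "s + single ?p 1 - single (a, a) 1 - single (b, b) 1"
    have "div_reduce a b s = ?u"
      using False by (simp add: div_reduce_def)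
    moreover have u: "?u + single (a, a) 1 + single (b, b) 1 = s + single ?p 1"
      by (rule poly_mapping_eqI) (use diag distinct in \<open>auto simp: lookup_add lookup_minus lookup_single_if\<close>)
    moreover have "keys ?u \<subseteq> Pairs n"
      using P outside by (auto simp: keys_subset_Pairs_iff lookup_add lookup_minus lookup_single_if)
    moreover have "reduced ?u"
      using red zero by (auto simp: reduced_def lookup_add lookup_minus lookup_single_if)
    moreover have "weight n (incidence l) ?u = d l" if "l \<in> {1..n}" for l
    proof -
      have "weight n (incidence l) ?u + incidence l (a, a) + incidence l (b, b)
          = weight n (incidence l) s + incidence l ?p"
        using arg_cong[OF u, of "weight n (incidence l)"] P by (simp add: weight_add weight_single)
      then show ?thesis
        using incidence_diag_pair[OF ab(3), of l] deg c that by simp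
    qed
    ultimately show ?thesis
      by (simp add: reduced_fiber_def fiber_iff)
  qed
qed

lemma div_reduce_mult_reduce:
  assumes "a \<noteq> b" "reduced r"
  shows "div_reduce a b (mult_reduce a b r) = r"
proof -
  let ?p = "npair a b"
  have ne: "?p \<noteq> (a, a)" "?p \<noteq> (b, b)" "(a, a) \<noteq> (b, b)"
    using npair_neq_diagonal[OF assms(1)] assms(1) by auto
  consider "lookup r ?p = 0" | "lookup r ?p = 1"
    using reduced_lookup_le[OF assms(2) npair_off_diagonal[OF assms(1)]] by linarith
  then show ?thesis
  proof cases
    case 1
    then show ?thesis
      by (intro poly_mapping_eqI) (auto simp: mult_reduce_def div_reduce_def lookup_add lookup_minus lookup_single_if)
  next
    case 2
    then show ?thesis using ne
      by (intro poly_mapping_eqI) (auto simp: mult_reduce_def div_reduce_def lookup_add lookup_minus lookup_single_if)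
  qed
qed

lemma mult_reduce_div_reduce:
  assumes "a \<noteq> b"
    and "lookup s (npair a b) = 1
      \<or> lookup s (npair a b) = 0 \<and> lookup s (a, a) \<ge> 1 \<and> lookup s (b, b) \<ge> 1"
  shows "mult_reduce a b (div_reduce a b s) = s"
proof -
  let ?p = "npair a b"
  have ne: "?p \<noteq> (a, a)" "?p \<noteq> (b, b)" "(a, a) \<noteq> (b, b)"
    using npair_neq_diagonal[OF assms(1)] assms(1) by auto
  consider "lookup s ?p = 1" | "lookup s ?p = 0" "lookup s (a, a) \<ge> 1" "lookup s (b, b) \<ge> 1"
    using assms(2) by auto
  then show ?thesis
  proof cases
    case 1
    then show ?thesis
      by (intro poly_mapping_eqI) (auto simp: mult_reduce_def div_reduce_def lookup_add lookup_minus lookup_single_if)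
  next
    case 2
    then show ?thesis using ne
      by (intro poly_mapping_eqI) (auto simp: mult_reduce_def div_reduce_def lookup_add lookup_minus lookup_single_if)
  qed
qed

lemma xvar_mult_sum_reduced_fiber:
  assumes ab: "a \<in> {1..n}" "b \<in> {1..n}" "a \<noteq> b"
    and c: "\<forall>l\<in>{1..n}. c l = d l + incidence l (npair a b)"
    and c_a: "c a = n - 1" and c_b: "c b = n - 1"
  shows "eq_mod_J n (xvar a b * (\<Sum>r\<in>reduced_fiber n d. xmono r) :: 'k::comm_ring_1 spoly)
      (\<Sum>s\<in>reduced_fiber n c. xmono s)"
proof -
  have "xvar a b * (\<Sum>r\<in>reduced_fiber n d. xmono r) = (\<Sum>r\<in>reduced_fiber n d. xvar a b * xmono r :: 'k spoly)"
    by (simp add: sum_distrib_left)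
  also have "eq_mod_J n \<dots> (\<Sum>r\<in>reduced_fiber n d. xmono (mult_reduce a b r))"
    using ab by (intro eq_mod_J_sum xvar_mult_xmono_eq_mod_J_mult_reduce)
  also have "(\<Sum>r\<in>reduced_fiber n d. xmono (mult_reduce a b r)) = (\<Sum>s\<in>reduced_fiber n c. xmono s :: 'k spoly)"
  proof (rule sum.reindex_bij_witness[where i = "div_reduce a b" and j = "mult_reduce a b"])
    fix s assume s: "s \<in> reduced_fiber n c"
    show "div_reduce a b s \<in> reduced_fiber n d"
      using div_reduce_in_reduced_fiber[OF ab s c c_a c_b] .
    show "mult_reduce a b (div_reduce a b s) = s"
      using mult_reduce_div_reduce[OF ab(3) reduced_fiber_pair_or_diagonals[OF s ab c_a c_b]] .
  next
    fix r assume r: "r \<in> reduced_fiber n d"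
    show "mult_reduce a b r \<in> reduced_fiber n c"
      using mult_reduce_in_reduced_fiber[OF ab r c] .
    show "div_reduce a b (mult_reduce a b r) = r"
      using r ab(3) by (simp add: reduced_fiber_def div_reduce_mult_reduce)
  qed simp
  finally show ?thesis .
qed

theorem lemma2p18:
  fixes n i j k :: nat
  assumes "n \<ge> 3" and "odd n"
    and "i \<in> {1..n}" and "j \<in> {1..n}" and "k \<in> {1..n}"
    and "i \<noteq> j" and "j \<noteq> k" and "i \<noteq> k"
  shows "eq_mod_J n (xvar i j * p_plus n k :: 'k::field spoly) (xvar j k * p_plus n i)"
proof -
  define d where "d m = (\<lambda>l. n - 2 + (if l = m then 1 else 0))" for m :: nat
  define c where "c l = n - 2 + (if l = i then 1 else 0) + (if l = j then 1 else 0)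
      + (if l = k then 1 else 0)" for l
  have c_ij: "c l = d k l + incidence l (npair i j)" and c_jk: "c l = d i l + incidence l (npair j k)" for l
    by (auto simp: c_def d_def incidence_npair)
  have c_ijk: "c i = n - 1" "c j = n - 1" "c k = n - 1"
    using assms(1,6-8) by (simp_all add: c_def)
  have "eq_mod_J n (xvar i j * p_plus n k :: 'k spoly) (xvar i j * (\<Sum>r\<in>reduced_fiber n (d k). xmono r))"
    unfolding d_def by (intro eq_mod_J_mult_left p_plus_eq_mod_J)
  also have "eq_mod_J n \<dots> (\<Sum>s\<in>reduced_fiber n c. xmono s)"
    using assms(3,4,6) c_ij c_ijk by (intro xvar_mult_sum_reduced_fiber) auto
  also have "eq_mod_J n \<dots> (xvar j k * (\<Sum>r\<in>reduced_fiber n (d i). xmono r))"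
    using assms(4,5,7) c_jk c_ijk by (intro xvar_mult_sum_reduced_fiber[THEN eq_mod_J_sym]) auto
  also have "eq_mod_J n \<dots> (xvar j k * p_plus n i)"
    unfolding d_def by (intro eq_mod_J_mult_left p_plus_eq_mod_J[THEN eq_mod_J_sym])
  finally show ?thesis .
qed

end
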